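(* Fix $\mu\in(-1,1)$ and let $u^\xi\in\mathcal M_\mu$. Then for $j,k\in\{1,\dots,N\}$, $$S_{kj}:=\langle u^\xi_k,u^\xi_j\rangle=\mathcal X\varepsilon^{-1}\big[\delta_{kj}+(-1)^{k+j}\big]+\mathcal O(\exp).$$
   Context: $0<\varepsilon\ll1$; $f(u)=u^3-u$; $\langle\cdot,\cdot\rangle$ inner product of $L^2(0,1)$. $U(x)=\tanh(x/\sqrt2)$; $U(x;\xi,\pm1)=\pm U((x-\xi)/\varepsilon)$; $\mathcal X=\int_{\mathbb R}U'(y)^2dy$. Fix an integer $N\ge1$, small $\kappa_0>0$, $\rho_\varepsilon=\varepsilon^{\kappa_0}$. $\Omega_{\rho_\varepsilon}=\{h\in\mathbb R^{N+1}:0<h_1<\dots<h_{N+1}<1,\ \min_{j=0,\dots,N+1}|h_{j+1}-h_j|>\varepsilon/\rho_\varepsilon\}$ with $h_0=-h_1$, $h_{N+2}=2-h_{N+1}$. For $h\in\Omega_{\rho_\varepsilon}$, $u^h=\sum_{j=1}^{N+1}U(\cdot;h_j,(-1)^{j+1})+\beta_N$, where $\beta_N=\frac{(-1)^N-1}{2}+\mathcal O(\exp)$ (also for derivatives) makes $u^h(0)=-1$ and $u^h$ satisfy Neumann boundary conditions; $\mathcal O(\exp)$ means exponentially small in $\varepsilon$. $\mathcal M=\{u^h:h\in\Omega_{\rho_\varepsilon}\}$, $\mathcal M_\mu=\{u^h\in\mathcal M:\int_0^1u^h=\mu\}$. There is a smooth map $h_{N+1}:[0,1]^N\to\mathbb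 R$ such that $u^h\in\mathcal M_\mu$ iff $h=(\xi,h_{N+1}(\xi))\in\Omega_{\rho_\varepsilon}$, $\xi=(h_1,\dots,h_N)$, and $\partial h_{N+1}/\partial h_i=(-1)^{N-i}+\mathcal O(\exp)$. $u^\xi=u^{(\xi,h_{N+1}(\xi))}$, $u^\xi_k=\partial_{\xi_k}u^\xi$. *)

theory Defs
  imports "HOL-Analysis.Analysis"
begin

definition Uprof :: "real \<Rightarrow> real" where
  "Uprof x = tanh (x / sqrt 2)"

definition Xconst :: real where
  "Xconst = integral UNIV (\<lambda>y. (deriv Uprof y)\<^sup>2)"

definition hext :: "nat \<Rightarrow> (nat \<Rightarrow> real) \<Rightarrow> nat \<Rightarrow> real" where
  "hext N h j = (if j = 0 then - h 1 else if j = N + 2 then 2 - h (N + 1) else h j)"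

text \<open>The set Omega_{rho_eps} with rho_eps = eps^kappa0 (h indexed by 1..N+1).\<close>
definition Omega :: "nat \<Rightarrow> real \<Rightarrow> real \<Rightarrow> (nat \<Rightarrow> real) \<Rightarrow> bool" where
  "Omega N \<kappa>0 \<epsilon> h \<longleftrightarrow>
     0 < h 1 \<and> (\<forall>j\<in>{1..N}. h j < h (j + 1)) \<and> h (N + 1) < 1 \<and>
     (\<forall>j\<in>{0..N+1}. \<bar>hext N h (j + 1) - hext N h j\<bar> > \<epsilon> / (\<epsilon> powr \<kappa>0))"

text \<open>u^h(x) = sum_{j=1}^{N+1} U((x-h_j)/eps; (-1)^(j+1)) + beta_N(h,x); the correction
  beta_N is the parameter b (depending on eps, h, x).\<close>
definition uh :: "nat \<Rightarrow> (real \<Rightarrow> (nat \<Rightarrow> real) \<Rightarrow> real \<Rightarrow> real) \<Rightarrow> real \<Rightarrow> (nat \<Rightarrow> real) \<Rightarrow> real \<Rightarrow> real" where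
  "uh N b \<epsilon> h x = (\<Sum>j=1..N+1. (-1) ^ (j + 1) * Uprof ((x - h j) / \<epsilon>)) + b \<epsilon> h x"

text \<open>h(xi) = (xi_1, ..., xi_N, h_{N+1}(xi)), with H the map h_{N+1} (depending on eps).\<close>
definition hxi :: "nat \<Rightarrow> (real \<Rightarrow> (nat \<Rightarrow> real) \<Rightarrow> real) \<Rightarrow> real \<Rightarrow> (nat \<Rightarrow> real) \<Rightarrow> (nat \<Rightarrow> real)" where
  "hxi N H \<epsilon> \<xi> = \<xi>(N + 1 := H \<epsilon> \<xi>)"

definition uxi where
  "uxi N b H \<epsilon> \<xi> x = uh N b \<epsilon> (hxi N H \<epsilon> \<xi>) x"

definition uxik where
  "uxik N b H \<epsilon> \<xi> k x = deriv (\<lambda>t. uxi N b H \<epsilon> (\<xi>(k := t)) x) (\<xi> k)"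

definition L2ip :: "(real \<Rightarrow> real) \<Rightarrow> (real \<Rightarrow> real) \<Rightarrow> real" where
  "L2ip f g = integral {0..1} (\<lambda>x. f x * g x)"

end

(*
  Moving the k-th front of u^xi moves, through the mass constraint, also the last front,
  with velocity dh_{N+1}/dxi_k = (-1)^(N-k) + O(exp).  Hence, up to O(exp) terms,
  u^xi_k = (-1)^k (psi_{xi_k} - psi_{h_{N+1}}) with psi_a(x) = U'((x - a)/eps)/eps.
  Distinct fronts are more than eps/rho_eps apart, so the product of two such bumps is
  exponentially small pointwise, while every front stays eps/(2 rho_eps) away from the
  boundary, so that the integral of psi_a^2 over (0,1) is X/eps + O(exp).  Expanding the
  product u^xi_k u^xi_j leaves psi_{xi_k}^2 (only if k = j) and (-1)^(k+j) psi_{h_{N+1}}^2.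
*)

theory Submission
  imports Defs "HOL-Real_Asymp.Real_Asymp"
begin

section \<open>The front profile\<close>

definition dUprof :: "real \<Rightarrow> real" where
  "dUprof y = (1 - (tanh (y / sqrt 2))\<^sup>2) / sqrt 2"

lemma Uprof_has_real_derivative: "(Uprof has_real_derivative dUprof y) (at y)"
  unfolding Uprof_def dUprof_def
  by (auto intro!: derivative_eq_intros simp: cosh_real_pos[THEN less_imp_neq, symmetric] field_simps)

lemma deriv_Uprof: "deriv Uprof = dUprof"
  using Uprof_has_real_derivative DERIV_imp_deriv by blast

lemma continuous_on_dUprof: "continuous_on S dUprof"
  unfolding dUprof_def
  by (intro continuous_intros) (auto simp: cosh_real_pos[THEN less_imp_neq, symmetric])

lemma dUprof_nonneg: "0 \<le> dUprof y"
  unfolding dUprof_def using tanh_real_bounds[of "y / sqrt 2"]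
  by (simp add: abs_square_le_1 abs_le_iff less_imp_le)

lemma dUprof_le_1: "dUprof y \<le> 1"
proof -
  have "1 \<le> sqrt (2::real)" by simp
  then have "1 - (tanh (y / sqrt 2))\<^sup>2 \<le> sqrt 2" by (smt (verit) zero_le_power2)
  then show ?thesis unfolding dUprof_def by (simp add: divide_le_eq)
qed

lemma one_minus_tanh_le: "1 - tanh z \<le> 2 * exp (-2 * z)" for z :: real
proof -
  define w where "w = exp (-2 * z)"
  have "w > 0" unfolding w_def by simp
  moreover have "tanh z = (1 - w) / (1 + w)" unfolding w_def by (rule tanh_real_altdef)
  ultimately have "1 - tanh z = 2 * w / (1 + w)" by (simp add: field_simps)
  also have "\<dots> \<le> 2 * w" using \<open>w > 0\<close> by (simp add: field_simps)
  finally show ?thesis unfolding w_def .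
qed

lemma dUprof_le_exp: "dUprof y \<le> 4 * exp (- \<bar>y\<bar>)"
proof -
  define T where "T = tanh (\<bar>y\<bar> / sqrt 2)"
  have T: "0 \<le> T" "T < 1" unfolding T_def using tanh_real_lt_1 by auto
  have "T = \<bar>tanh (y / sqrt 2)\<bar>" unfolding T_def by (simp add: abs_divide flip: tanh_real_abs)
  then have "dUprof y = (1 - T\<^sup>2) / sqrt 2" unfolding dUprof_def by simp
  also have "\<dots> \<le> 1 - T\<^sup>2"
    using T power_le_one[of T 2] by (simp add: divide_le_eq mult_le_cancel_left1)
  also have "\<dots> = (1 - T) * (1 + T)" by (simp add: power2_eq_square algebra_simps)
  also have "\<dots> \<le> 2 * exp (-2 * (\<bar>y\<bar> / sqrt 2)) * 2"
    using one_minus_tanh_le[of "\<bar>y\<bar> / sqrt 2"] T unfolding T_def by (intro mult_mono) auto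
  also have "exp (-2 * (\<bar>y\<bar> / sqrt 2)) \<le> exp (- \<bar>y\<bar>)"
  proof -
    have "2 * (\<bar>y\<bar> / sqrt 2) = sqrt 2 * \<bar>y\<bar>" by (simp add: field_simps)
    also have "\<bar>y\<bar> \<le> sqrt 2 * \<bar>y\<bar>" by (simp add: mult_le_cancel_right1)
    finally show ?thesis by simp
  qed
  finally show ?thesis by simp
qed

(* A primitive of dUprof^2, with limits -Xconst/2 and Xconst/2 at -infinity and infinity. *)
definition Uenergy :: "real \<Rightarrow> real" where
  "Uenergy y = (tanh (y / sqrt 2) - (tanh (y / sqrt 2))^3 / 3) / sqrt 2"

lemma Uenergy_has_real_derivative: "(Uenergy has_real_derivative (dUprof y)\<^sup>2) (at y)"
proof -
  have "Uenergy = (\<lambda>y. (Uprof y - Uprof y ^ 3 / 3) / sqrt 2)"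
    unfolding Uenergy_def Uprof_def by auto
  moreover have "((\<lambda>y. (Uprof y - Uprof y ^ 3 / 3) / sqrt 2) has_real_derivative
      (dUprof y - (of_nat 3 * (dUprof y * Uprof y ^ (3 - Suc 0))) / 3) / sqrt 2) (at y)"
    by (intro DERIV_cdivide DERIV_diff DERIV_power Uprof_has_real_derivative)
  moreover have "(dUprof y - (of_nat 3 * (dUprof y * Uprof y ^ (3 - Suc 0))) / 3) / sqrt 2
      = (dUprof y)\<^sup>2"
  proof -
    have "(dUprof y - (of_nat 3 * (dUprof y * Uprof y ^ (3 - Suc 0))) / 3) / sqrt 2
        = dUprof y * ((1 - (Uprof y)\<^sup>2) / sqrt 2)"
      by (simp add: field_simps)
    also have "(1 - (Uprof y)\<^sup>2) / sqrt 2 = dUprof y" unfolding dUprof_def Uprof_def ..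
    finally show ?thesis by (simp add: power2_eq_square)
  qed
  ultimately show ?thesis by simp
qed

lemma Uenergy_minus: "Uenergy (- y) = - Uenergy y"
  unfolding Uenergy_def by (simp add: field_simps)

lemma Xconst_eq: "Xconst = 2 * sqrt 2 / 3"
proof -
  have lim_top: "(Uenergy \<longlongrightarrow> sqrt 2 / 3) at_top"
    unfolding Uenergy_def[abs_def] by (real_asymp simp: sqrt_def[symmetric] field_simps)
  have lim_bot: "(Uenergy \<longlongrightarrow> - (sqrt 2 / 3)) at_bot"
    unfolding Uenergy_def[abs_def] by (real_asymp simp: sqrt_def[symmetric] field_simps)
  have cont: "isCont (\<lambda>y. (dUprof y)\<^sup>2) x" for x
    using continuous_on_dUprof[of UNIV] by (simp add: continuous_on_eq_continuous_at continuous_intros)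
  have FTC: "set_integrable lborel (einterval (-\<infinity>) \<infinity>) (\<lambda>y. (dUprof y)\<^sup>2)"
     "(LBINT y=-\<infinity>..\<infinity>. (dUprof y)\<^sup>2) = sqrt 2 / 3 - (- (sqrt 2 / 3))"
    by (rule interval_integral_FTC_nonneg[where F = Uenergy and A = "- (sqrt 2 / 3)" and B = "sqrt 2 / 3"];
        auto simp: ereal_tendsto_simps Uenergy_has_real_derivative cont lim_top lim_bot)+
  have "Xconst = (LINT y:UNIV|lborel. (dUprof y)\<^sup>2)"
    unfolding Xconst_def deriv_Uprof
    using set_borel_integral_eq_integral(2)[OF FTC(1)] by (simp add: einterval_eq_UNIV)
  also have "\<dots> = (LBINT y=-\<infinity>..\<infinity>. (dUprof y)\<^sup>2)"
    by (simp add: interval_lebesgue_integral_def einterval_eq_UNIV)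
  finally show ?thesis using FTC(2) by simp
qed

lemma Uenergy_tail: assumes "0 \<le> y" shows "\<bar>Uenergy y - Xconst / 2\<bar> \<le> 4 * exp (- y)"
proof -
  define T where "T = tanh (y / sqrt 2)"
  have T: "-1 < T" "T < 1" unfolding T_def using tanh_real_bounds by auto
  define A where "A = (1 - T)\<^sup>2 * (2 + T) / (3 * sqrt 2)"
  have "Xconst / 2 - Uenergy y = A"
    unfolding Xconst_eq Uenergy_def T_def[symmetric] A_def
    by (simp add: field_simps power2_eq_square power3_eq_cube)
  moreover have "0 \<le> A" unfolding A_def using T by simp
  moreover have "A \<le> 2 * (1 - T)"
  proof -
    have "(1 - T) * (1 - T) \<le> 2 * (1 - T)" using T by (intro mult_right_mono) auto
    then have "(1 - T)\<^sup>2 * (2 + T) \<le> (2 * (1 - T)) * 3"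
      using T by (intro mult_mono) (auto simp: power2_eq_square)
    also have "\<dots> \<le> 2 * (1 - T) * (3 * sqrt 2)"
      using T by (intro mult_left_mono) (auto simp: mult_le_cancel_left1)
    finally show ?thesis unfolding A_def by (simp add: divide_le_eq)
  qed
  moreover have "1 - T \<le> 2 * exp (- y)"
  proof -
    have "1 - T \<le> 2 * exp (-2 * (y / sqrt 2))" unfolding T_def by (rule one_minus_tanh_le)
    moreover have "2 * (y / sqrt 2) = sqrt 2 * y" by (simp add: field_simps)
    moreover have "y \<le> sqrt 2 * y" using assms by (simp add: mult_le_cancel_right1)
    ultimately show ?thesis by (smt (verit) exp_le_cancel_iff)
  qed
  ultimately show ?thesis unfolding abs_le_iff using exp_gt_zero[of "- y"] by argo
qed

section \<open>Bumps\<close>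

(* bump eps a x = - d/da U((x - a)/eps): the effect of moving a front located at a. *)
definition bump :: "real \<Rightarrow> real \<Rightarrow> real \<Rightarrow> real" where
  "bump \<epsilon> a x = dUprof ((x - a) / \<epsilon>) / \<epsilon>"

lemma bump_nonneg: "0 < \<epsilon> \<Longrightarrow> 0 \<le> bump \<epsilon> a x"
  unfolding bump_def using dUprof_nonneg by simp

lemma bump_le: "0 < \<epsilon> \<Longrightarrow> bump \<epsilon> a x \<le> 1 / \<epsilon>"
  unfolding bump_def using dUprof_le_1 by (simp add: divide_right_mono)

lemma bump_le_exp:
  assumes "0 < \<epsilon>" "r \<le> \<bar>x - a\<bar>"
  shows "bump \<epsilon> a x \<le> 4 / \<epsilon> * exp (- r / \<epsilon>)"
proof -
  have "dUprof ((x - a) / \<epsilon>) \<le> 4 * exp (- \<bar>(x - a) / \<epsilon>\<bar>)" by (rule dUprof_le_exp)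
  also have "\<dots> \<le> 4 * exp (- r / \<epsilon>)"
    using assms by (simp add: abs_divide divide_right_mono)
  finally show ?thesis unfolding bump_def using assms by (simp add: divide_right_mono)
qed

lemma bump_mult_bump_le:
  assumes "0 < \<epsilon>" "2 * r \<le> \<bar>a - b\<bar>"
  shows "bump \<epsilon> a x * bump \<epsilon> b x \<le> 4 / \<epsilon>\<^sup>2 * exp (- r / \<epsilon>)"
proof -
  have bounds: "0 \<le> bump \<epsilon> a x" "0 \<le> bump \<epsilon> b x" "bump \<epsilon> a x \<le> 1 / \<epsilon>" "bump \<epsilon> b x \<le> 1 / \<epsilon>"
    using assms(1) bump_nonneg bump_le by auto
  consider "r \<le> \<bar>x - a\<bar>" | "r \<le> \<bar>x - b\<bar>" using assms(2) by linarith
  then have "bump \<epsilon> a x * bump \<epsilon> b x \<le> (4 / \<epsilon> * exp (- r / \<epsilon>)) * (1 / \<epsilon>)"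
  proof cases
    case 1
    then show ?thesis using bounds bump_le_exp[OF assms(1)] assms(1) by (intro mult_mono) auto
  next
    case 2
    then show ?thesis
      using bounds bump_le_exp[OF assms(1)] assms(1) by (subst mult.commute) (intro mult_mono, auto)
  qed
  then show ?thesis by (simp add: power2_eq_square)
qed

lemma continuous_on_bump: "0 < \<epsilon> \<Longrightarrow> continuous_on S (bump \<epsilon> a)"
  unfolding bump_def[abs_def]
  by (intro continuous_intros continuous_on_compose2[OF continuous_on_dUprof[of UNIV]]) auto

lemma bump_sq_has_integral:
  assumes "0 < \<epsilon>"
  shows "((\<lambda>x. (bump \<epsilon> a x)\<^sup>2) has_integral (Uenergy ((1 - a) / \<epsilon>) - Uenergy (- a / \<epsilon>)) / \<epsilon>) {0..1}"
proof -
  have "((\<lambda>x. (bump \<epsilon> a x)\<^sup>2) has_integral Uenergy ((1 - a) / \<epsilon>) / \<epsilon> - Uenergy ((0 - a) / \<epsilon>) / \<epsilon>) {0..1}"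
  proof (rule fundamental_theorem_of_calculus)
    fix x :: real
    have "((\<lambda>x. Uenergy ((x - a) / \<epsilon>) / \<epsilon>) has_real_derivative
        (dUprof ((x - a) / \<epsilon>))\<^sup>2 * (1 / \<epsilon>) / \<epsilon>) (at x)"
      using assms by (intro DERIV_cdivide DERIV_chain2[OF Uenergy_has_real_derivative])
        (auto intro!: derivative_eq_intros)
    moreover have "(dUprof ((x - a) / \<epsilon>))\<^sup>2 * (1 / \<epsilon>) / \<epsilon> = (bump \<epsilon> a x)\<^sup>2"
      unfolding bump_def by (simp add: power2_eq_square)
    ultimately show "((\<lambda>x. Uenergy ((x - a) / \<epsilon>) / \<epsilon>) has_vector_derivative (bump \<epsilon> a x)\<^sup>2)
        (at x within {0..1})"
      by (simp add: has_real_derivative_iff_has_vector_derivative[symmetric] has_field_derivative_at_within)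
  qed simp
  then show ?thesis by (simp add: diff_divide_distrib)
qed

lemma bump_sq_integral_approx:
  assumes "0 < \<epsilon>" "0 \<le> L" "L \<le> a / \<epsilon>" "L \<le> (1 - a) / \<epsilon>"
  shows "\<bar>integral {0..1} (\<lambda>x. (bump \<epsilon> a x)\<^sup>2) - Xconst / \<epsilon>\<bar> \<le> 8 / \<epsilon> * exp (- L)"
proof -
  have tail: "\<bar>Uenergy s - Xconst / 2\<bar> \<le> 4 * exp (- L)" if "L \<le> s" for s
  proof -
    have "\<bar>Uenergy s - Xconst / 2\<bar> \<le> 4 * exp (- s)"
      using that assms(2) by (intro Uenergy_tail) linarith
    also have "\<dots> \<le> 4 * exp (- L)" using that by simp
    finally show ?thesis .
  qed
  define p q where "p = (1 - a) / \<epsilon>" and "q = a / \<epsilon>"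
  have "integral {0..1} (\<lambda>x. (bump \<epsilon> a x)\<^sup>2) - Xconst / \<epsilon>
      = ((Uenergy p - Xconst / 2) + (Uenergy q - Xconst / 2)) / \<epsilon>"
    using integral_unique[OF bump_sq_has_integral[OF assms(1)]]
    unfolding p_def q_def by (simp add: Uenergy_minus diff_divide_distrib add_divide_distrib)
  then have "\<bar>integral {0..1} (\<lambda>x. (bump \<epsilon> a x)\<^sup>2) - Xconst / \<epsilon>\<bar>
      = \<bar>(Uenergy p - Xconst / 2) + (Uenergy q - Xconst / 2)\<bar> / \<epsilon>"
    using assms(1) by (simp add: abs_divide)
  also have "\<dots> \<le> (4 * exp (- L) + 4 * exp (- L)) / \<epsilon>"
    using tail[of p] tail[of q] assms unfolding p_def q_def
    by (intro divide_right_mono abs_triangle_ineq[THEN order_trans] add_mono) auto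
  finally show ?thesis by simp
qed

section \<open>Admissible front positions\<close>

lemma Omega_increasing:
  assumes "Omega N \<kappa> \<epsilon> h" "1 \<le> i" "i \<le> j" "j \<le> N + 1"
  shows "h i \<le> h j"
  using assms(3,4)
proof (induction j rule: dec_induct)
  case (step j)
  then have "h j < h (Suc j)" using assms(1,2) unfolding Omega_def by auto
  with step show ?case by simp
qed simp

lemma Omega_separated:
  assumes "Omega N \<kappa> \<epsilon> h" "i \<in> {1..N+1}" "j \<in> {1..N+1}" "i \<noteq> j"
  shows "\<epsilon> / \<epsilon> powr \<kappa> < \<bar>h i - h j\<bar>"
proof -
  have gap: "\<epsilon> / \<epsilon> powr \<kappa> < h j - h i" if "1 \<le> i" "i < j" "j \<le> N + 1" for i j
  proof -
    have "\<epsilon> / \<epsilon> powr \<kappa> < \<bar>hext N h (i + 1) - hext N h i\<bar>"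
      using assms(1) that unfolding Omega_def by auto
    moreover have "hext N h (i + 1) = h (i + 1)" "hext N h i = h i" using that unfolding hext_def by auto
    moreover have "h i < h (i + 1)" using assms(1) that unfolding Omega_def by auto
    moreover have "h (i + 1) \<le> h j" using Omega_increasing[OF assms(1)] that by simp
    ultimately show ?thesis by simp
  qed
  show ?thesis
    using gap[of i j] gap[of j i] assms(2-4) by (cases "i < j") auto
qed

lemma Omega_boundary_gap:
  assumes "Omega N \<kappa> \<epsilon> h" "i \<in> {1..N+1}"
  shows "\<epsilon> / \<epsilon> powr \<kappa> / 2 < h i" "\<epsilon> / \<epsilon> powr \<kappa> / 2 < 1 - h i"
proof -
  have "\<epsilon> / \<epsilon> powr \<kappa> < \<bar>hext N h 1 - hext N h 0\<bar>" "0 < h 1"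
    using assms(1) unfolding Omega_def by auto
  moreover have "h 1 \<le> h i" using Omega_increasing[OF assms(1)] assms(2) by simp
  ultimately show "\<epsilon> / \<epsilon> powr \<kappa> / 2 < h i" unfolding hext_def by simp
  have "\<epsilon> / \<epsilon> powr \<kappa> < \<bar>hext N h (N + 2) - hext N h (N + 1)\<bar>" "h (N + 1) < 1"
    using assms(1) unfolding Omega_def by (auto dest!: bspec[of _ _ "N + 1"])
  moreover have "h i \<le> h (N + 1)" using Omega_increasing[OF assms(1)] assms(2) by simp
  ultimately show "\<epsilon> / \<epsilon> powr \<kappa> / 2 < 1 - h i" unfolding hext_def by simp
qed

lemma eventually_Omega:
  assumes "Omega N \<kappa> \<epsilon> h" and lim: "\<And>j. ((\<lambda>t. g t j) \<longlongrightarrow> h j) F"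
  shows "eventually (\<lambda>t. Omega N \<kappa> \<epsilon> (g t)) F"
proof -
  have lim_hext: "((\<lambda>t. hext N (g t) j) \<longlongrightarrow> hext N h j) F" for j
    unfolding hext_def by (auto intro!: tendsto_intros lim)
  have "eventually (\<lambda>t. 0 < g t 1) F" "eventually (\<lambda>t. g t (N + 1) < 1) F"
    using assms(1) lim order_tendstoD unfolding Omega_def by blast+
  moreover have "eventually (\<lambda>t. \<forall>j\<in>{1..N}. g t j < g t (j + 1)) F"
  proof (rule eventually_ball_finite[OF finite_atLeastAtMost], rule ballI)
    fix j assume "j \<in> {1..N}"
    then have "0 < h (j + 1) - h j" using assms(1) unfolding Omega_def by auto
    with tendsto_diff[OF lim lim] have "eventually (\<lambda>t. 0 < g t (j + 1) - g t j) F"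
      by (rule order_tendstoD(1))
    then show "eventually (\<lambda>t. g t j < g t (j + 1)) F" by eventually_elim simp
  qed
  moreover have "eventually (\<lambda>t. \<forall>j\<in>{0..N+1}.
      \<epsilon> / \<epsilon> powr \<kappa> < \<bar>hext N (g t) (j + 1) - hext N (g t) j\<bar>) F"
  proof (rule eventually_ball_finite[OF finite_atLeastAtMost], rule ballI)
    fix j assume "j \<in> {0..N+1}"
    then have "\<epsilon> / \<epsilon> powr \<kappa> < \<bar>hext N h (j + 1) - hext N h j\<bar>"
      using assms(1) unfolding Omega_def by blast
    with tendsto_rabs[OF tendsto_diff[OF lim_hext lim_hext]]
    show "eventually (\<lambda>t. \<epsilon> / \<epsilon> powr \<kappa> < \<bar>hext N (g t) (j + 1) - hext N (g t) j\<bar>) F"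
      by (rule order_tendstoD(1))
  qed
  ultimately show ?thesis unfolding Omega_def by eventually_elim auto
qed

lemma Omega_hxi_interior:
  assumes "0 < \<epsilon>" "Omega N \<kappa> \<epsilon> (hxi N H \<epsilon> \<xi>)" "l \<in> {1..N}"
  shows "0 < \<xi> l \<and> \<xi> l < 1"
proof -
  have "0 < \<epsilon> / \<epsilon> powr \<kappa> / 2" using assms(1) by simp
  with Omega_boundary_gap[OF assms(2), of l] assms(3) show ?thesis by (simp add: hxi_def)
qed

section \<open>Tangent vectors to the slow manifold\<close>

lemma hxi_fun_upd:
  "k \<in> {1..N} \<Longrightarrow> hxi N H \<epsilon> (\<xi>(k := t)) j =
     (if j = N + 1 then H \<epsilon> (\<xi>(k := t)) else if j = k then t else \<xi> j)"
  unfolding hxi_def by auto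

lemma uxi_fun_upd:
  assumes "k \<in> {1..N}"
  shows "uxi N b H \<epsilon> (\<xi>(k := t)) x =
    (\<Sum>j\<in>{1..N} - {k}. (-1) ^ (j + 1) * Uprof ((x - \<xi> j) / \<epsilon>))
    + (-1) ^ (k + 1) * Uprof ((x - t) / \<epsilon>)
    + (-1) ^ N * Uprof ((x - H \<epsilon> (\<xi>(k := t))) / \<epsilon>)
    + b \<epsilon> (hxi N H \<epsilon> (\<xi>(k := t))) x"
proof -
  define f where "f j = (-1) ^ (j + 1) * Uprof ((x - hxi N H \<epsilon> (\<xi>(k := t)) j) / \<epsilon>)" for j
  have "sum f {1..N+1} = f k + (f (N + 1) + sum f ({1..N} - {k}))"
    using assms by (simp add: sum.cl_ivl_Suc) (rule sum.remove; auto)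
  moreover have "sum f ({1..N} - {k})
      = (\<Sum>j\<in>{1..N} - {k}. (-1) ^ (j + 1) * Uprof ((x - \<xi> j) / \<epsilon>))"
    by (rule sum.cong) (auto simp: f_def hxi_fun_upd[OF assms])
  ultimately show ?thesis
    using assms unfolding uxi_def uh_def f_def[symmetric] by (simp add: f_def hxi_fun_upd)
qed

lemma has_real_derivative_uxi:
  assumes "0 < \<epsilon>" "k \<in> {1..N}"
    and H: "((\<lambda>t. H \<epsilon> (\<xi>(k := t))) has_real_derivative D) (at (\<xi> k))"
    and b: "((\<lambda>t. b \<epsilon> (hxi N H \<epsilon> (\<xi>(k := t))) x) has_real_derivative B) (at (\<xi> k))"
  shows "((\<lambda>t. uxi N b H \<epsilon> (\<xi>(k := t)) x) has_real_derivative
      (-1) ^ k * bump \<epsilon> (\<xi> k) x + (-1) ^ (N + 1) * D * bump \<epsilon> (H \<epsilon> \<xi>) x + B) (at (\<xi> k))"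
proof -
  have "((\<lambda>t. (\<Sum>j\<in>{1..N} - {k}. (-1) ^ (j + 1) * Uprof ((x - \<xi> j) / \<epsilon>))
      + (-1) ^ (k + 1) * Uprof ((x - t) / \<epsilon>)
      + (-1) ^ N * Uprof ((x - H \<epsilon> (\<xi>(k := t))) / \<epsilon>)
      + b \<epsilon> (hxi N H \<epsilon> (\<xi>(k := t))) x) has_real_derivative
      0 + (-1) ^ (k + 1) * (dUprof ((x - \<xi> k) / \<epsilon>) * (- 1 / \<epsilon>))
      + (-1) ^ N * (dUprof ((x - H \<epsilon> (\<xi>(k := \<xi> k))) / \<epsilon>) * (- D / \<epsilon>)) + B) (at (\<xi> k))"
    using assms(1)
    by (intro DERIV_add DERIV_const DERIV_cmult DERIV_chain2[OF Uprof_has_real_derivative] b)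
      (auto intro!: derivative_eq_intros H)
  then show ?thesis
    unfolding uxi_fun_upd[OF assms(2)] bump_def by (simp add: algebra_simps)
qed

lemma uxik_approx:
  assumes "0 < \<epsilon>" "\<epsilon> \<le> 1" "k \<in> {1..N}"
    and H: "((\<lambda>t. H \<epsilon> (\<xi>(k := t))) has_real_derivative D) (at (\<xi> k))" "\<bar>D - (-1) ^ (N - k)\<bar> \<le> Ec"
    and b: "((\<lambda>t. b \<epsilon> (hxi N H \<epsilon> (\<xi>(k := t))) x) has_real_derivative B) (at (\<xi> k))" "\<bar>B\<bar> \<le> Ec"
  shows "\<bar>uxik N b H \<epsilon> \<xi> k x - (-1) ^ k * (bump \<epsilon> (\<xi> k) x - bump \<epsilon> (H \<epsilon> \<xi>) x)\<bar> \<le> 2 * Ec / \<epsilon>"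
proof -
  have sign: "(-1::real) ^ (N + 1) * (-1) ^ (N - k) = - ((-1) ^ k)"
    using assms(3) by (simp add: power_add[symmetric] minus_one_power_iff)
  have "uxik N b H \<epsilon> \<xi> k x - (-1) ^ k * (bump \<epsilon> (\<xi> k) x - bump \<epsilon> (H \<epsilon> \<xi>) x)
      = (-1) ^ (N + 1) * (D - (-1) ^ (N - k)) * bump \<epsilon> (H \<epsilon> \<xi>) x + B"
    unfolding uxik_def DERIV_imp_deriv[OF has_real_derivative_uxi[where H = H and b = b and \<xi> = \<xi>, OF assms(1,3) H(1) b(1)]]
    using sign by (simp add: algebra_simps)
  also have "\<bar>\<dots>\<bar> \<le> \<bar>D - (-1) ^ (N - k)\<bar> * bump \<epsilon> (H \<epsilon> \<xi>) x + \<bar>B\<bar>"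
    using abs_triangle_ineq[of "(-1) ^ (N + 1) * (D - (-1) ^ (N - k)) * bump \<epsilon> (H \<epsilon> \<xi>) x" B]
      bump_nonneg[OF assms(1), of "H \<epsilon> \<xi>" x] by (simp add: abs_mult)
  also have "\<dots> \<le> Ec * (1 / \<epsilon>) + Ec"
    using H(2) b(2) bump_nonneg[OF assms(1)] bump_le[OF assms(1)] by (intro add_mono mult_mono) auto
  also have "\<dots> \<le> 2 * Ec / \<epsilon>"
  proof -
    have "0 \<le> Ec" using b(2) by linarith
    then have "Ec \<le> Ec / \<epsilon>" using assms(1,2) by (simp add: le_divide_eq mult_left_le)
    then show ?thesis by simp
  qed
  finally show ?thesis .
qed

lemma borel_measurable_deriv_param:
  fixes f :: "real \<Rightarrow> real \<Rightarrow> real"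
  assumes S: "S \<in> sets lebesgue"
    and diff: "\<And>x. x \<in> S \<Longrightarrow> (\<lambda>t. f t x) differentiable (at t0)"
    and cont: "eventually (\<lambda>t. continuous_on S (f t)) (at t0)" "continuous_on S (f t0)"
  shows "(\<lambda>x. deriv (\<lambda>t. f t x) t0) \<in> borel_measurable (lebesgue_on S)"
proof -
  define d :: "nat \<Rightarrow> real" where "d n = 1 / Suc n" for n
  have "((\<lambda>n. t0 + d n) \<longlongrightarrow> t0 + 0) sequentially"
    unfolding d_def by (intro tendsto_intros LIMSEQ_Suc[OF lim_1_over_n])
  then have t_lim: "filterlim (\<lambda>n. t0 + d n) (at t0) sequentially"
    by (auto simp: filterlim_at d_def)
  \<comment> \<open>difference quotients, cut off to 0 while the curve f (t0 + d n) is not known to be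
    continuous; eventually they are the true quotients\<close>
  define Q where "Q n x = (if continuous_on S (f (t0 + d n)) then (f (t0 + d n) x - f t0 x) / d n else 0)"
    for n x
  show ?thesis
  proof (rule borel_measurable_LIMSEQ_real)
    show "Q n \<in> borel_measurable (lebesgue_on S)" for n
      unfolding Q_def[abs_def] using S cont(2)
      by (cases "continuous_on S (f (t0 + d n))")
        (auto intro!: continuous_imp_measurable_on_sets_lebesgue continuous_intros simp: d_def)
    fix x assume "x \<in> space (lebesgue_on S)"
    then have "x \<in> S" using S by simp
    have "((\<lambda>t. (f t x - f t0 x) / (t - t0)) \<longlongrightarrow> deriv (\<lambda>t. f t x) t0) (at t0)"
      using diff[OF \<open>x \<in> S\<close>] by (simp add: DERIV_deriv_iff_real_differentiable[symmetric] has_field_derivative_iff)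
    from filterlim_compose[OF this t_lim]
    have "(\<lambda>n. (f (t0 + d n) x - f t0 x) / d n) \<longlonglongrightarrow> deriv (\<lambda>t. f t x) t0" by simp
    moreover have "eventually (\<lambda>n. (f (t0 + d n) x - f t0 x) / d n = Q n x) sequentially"
      using filterlim_iff[THEN iffD1, OF t_lim, rule_format, OF cont(1)] by eventually_elim (simp add: Q_def)
    ultimately show "(\<lambda>n. Q n x) \<longlonglongrightarrow> deriv (\<lambda>t. f t x) t0" by (rule Lim_transform_eventually)
  qed
qed

lemma continuous_on_uxi:
  assumes "0 < \<epsilon>" "\<And>x. b \<epsilon> (hxi N H \<epsilon> \<xi>) differentiable (at x)"
  shows "continuous_on S (uxi N b H \<epsilon> \<xi>)"
proof -
  have "continuous_on S (b \<epsilon> (hxi N H \<epsilon> \<xi>))"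
    using assms(2) by (intro continuous_at_imp_continuous_on ballI differentiable_imp_continuous_within)
  then show ?thesis unfolding uxi_def[abs_def] uh_def Uprof_def
    using assms(1) by (intro continuous_intros) (auto simp: cosh_real_pos[THEN less_imp_neq, symmetric])
qed

lemma uxik_borel_measurable:
  assumes "0 < \<epsilon>" "k \<in> {1..N}" and Om: "Omega N \<kappa> \<epsilon> (hxi N H \<epsilon> \<xi>)"
    and bx: "\<And>h x. Omega N \<kappa> \<epsilon> h \<Longrightarrow> b \<epsilon> h differentiable (at x)"
    and H: "(\<lambda>t. H \<epsilon> (\<xi>(k := t))) differentiable (at (\<xi> k))"
    and bt: "\<And>x. x \<in> {0..1} \<Longrightarrow> (\<lambda>t. b \<epsilon> (hxi N H \<epsilon> (\<xi>(k := t))) x) differentiable (at (\<xi> k))"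
  shows "uxik N b H \<epsilon> \<xi> k \<in> borel_measurable (lebesgue_on {0..1})"
  unfolding uxik_def[abs_def]
proof (rule borel_measurable_deriv_param)
  show "(\<lambda>t. uxi N b H \<epsilon> (\<xi>(k := t)) x) differentiable (at (\<xi> k))" if "x \<in> {0..1}" for x
    using has_real_derivative_uxi[OF assms(1,2)] H bt[OF that]
    unfolding real_differentiable_def by blast
  have "((\<lambda>t. H \<epsilon> (\<xi>(k := t))) \<longlongrightarrow> H \<epsilon> (\<xi>(k := \<xi> k))) (at (\<xi> k))"
    using H differentiable_imp_continuous_within isCont_def by blast
  then have "((\<lambda>t. hxi N H \<epsilon> (\<xi>(k := t)) j) \<longlongrightarrow> hxi N H \<epsilon> \<xi> j) (at (\<xi> k))" for j
    using assms(2) by (cases "j = k") (auto simp: hxi_fun_upd hxi_def)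
  from eventually_Omega[OF Om this]
  show "eventually (\<lambda>t. continuous_on {0..1} (\<lambda>x. uxi N b H \<epsilon> (\<xi>(k := t)) x)) (at (\<xi> k))"
    by eventually_elim (use assms(1) bx in \<open>simp add: continuous_on_uxi\<close>)
  show "continuous_on {0..1} (\<lambda>x. uxi N b H \<epsilon> (\<xi>(k := \<xi> k)) x)"
    using assms(1) bx[OF Om] by (simp add: continuous_on_uxi)
qed simp

section \<open>The Gram matrix\<close>

lemma signed_bump_product_approx:
  assumes "0 < \<epsilon>" "2 * r \<le> \<bar>a - c\<bar>" "2 * r \<le> \<bar>a' - c\<bar>"
    and "k \<noteq> j \<Longrightarrow> 2 * r \<le> \<bar>a - a'\<bar>" "k = j \<Longrightarrow> a = a'"
  shows "\<bar>((-1) ^ k * (bump \<epsilon> a x - bump \<epsilon> c x)) * ((-1) ^ j * (bump \<epsilon> a' x - bump \<epsilon> c x))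
      - ((if k = j then (bump \<epsilon> a x)\<^sup>2 else 0) + (-1) ^ (k + j) * (bump \<epsilon> c x)\<^sup>2)\<bar>
    \<le> 12 / \<epsilon>\<^sup>2 * exp (- r / \<epsilon>)"
proof -
  define p q h \<tau> where "p = bump \<epsilon> a x" and "q = bump \<epsilon> a' x" and "h = bump \<epsilon> c x"
    and "\<tau> = 4 / \<epsilon>\<^sup>2 * exp (- r / \<epsilon>)"
  have nonneg: "0 \<le> p * h" "0 \<le> h * q" "0 \<le> p * q"
    unfolding p_def q_def h_def using bump_nonneg[OF assms(1)] by simp_all
  have ph: "p * h \<le> \<tau>"
    unfolding p_def h_def \<tau>_def by (rule bump_mult_bump_le[OF assms(1,2)])
  have hq: "h * q \<le> \<tau>"
    unfolding q_def h_def \<tau>_def using assms(3) by (intro bump_mult_bump_le[OF assms(1)]) (simp add: abs_minus_commute)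
  show ?thesis
  proof (cases "k = j")
    case True
    have "(-1::real) ^ k * (-1) ^ k = 1" by (simp flip: power_add)
    then have "((-1) ^ k * (p - h)) * ((-1) ^ j * (q - h)) - (p\<^sup>2 + (-1) ^ (k + j) * h\<^sup>2)
        = - 2 * (p * h)"
      using True assms(5) unfolding p_def q_def
      by (simp add: power_add power2_eq_square algebra_simps)
    then show ?thesis
      using True ph nonneg unfolding p_def q_def h_def \<tau>_def by simp
  next
    case False
    have "((-1) ^ k * (p - h)) * ((-1) ^ j * (q - h)) - (-1) ^ (k + j) * h\<^sup>2
        = (-1) ^ (k + j) * (p * q - p * h - h * q)"
      by (simp add: power_add power2_eq_square algebra_simps)
    then have "\<bar>((-1) ^ k * (p - h)) * ((-1) ^ j * (q - h)) - (-1) ^ (k + j) * h\<^sup>2\<bar>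
        = \<bar>p * q - p * h - h * q\<bar>"
      by (simp add: abs_mult)
    moreover have "p * q \<le> \<tau>"
      unfolding p_def q_def \<tau>_def using assms(1,4) False by (intro bump_mult_bump_le) auto
    ultimately show ?thesis
      using False ph hq nonneg unfolding p_def q_def h_def \<tau>_def by simp
  qed
qed

lemma signed_bump_diff_le:
  assumes "0 < \<epsilon>"
  shows "\<bar>(-1) ^ i * (bump \<epsilon> a x - bump \<epsilon> c x)\<bar> \<le> 1 / \<epsilon>"
  using bump_nonneg[OF assms, of a x] bump_nonneg[OF assms, of c x] bump_le[OF assms, of a x]
    bump_le[OF assms, of c x]
  by (simp add: abs_mult abs_le_iff)

lemma mult_approx_bound:
  fixes u v A B :: real
  assumes "\<bar>A\<bar> \<le> \<alpha>" "\<bar>B\<bar> \<le> \<alpha>" "\<bar>u - A\<bar> \<le> e" "\<bar>v - B\<bar> \<le> e"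
  shows "\<bar>u * v - A * B\<bar> \<le> 2 * \<alpha> * e + e\<^sup>2"
proof -
  have "\<bar>u * v - A * B\<bar> = \<bar>A * (v - B) + (u - A) * B + (u - A) * (v - B)\<bar>"
    by (simp add: algebra_simps)
  also have "\<dots> \<le> \<bar>A * (v - B)\<bar> + \<bar>(u - A) * B\<bar> + \<bar>(u - A) * (v - B)\<bar>"
    by (rule order_trans[OF abs_triangle_ineq add_right_mono[OF abs_triangle_ineq]])
  also have "\<dots> \<le> \<alpha> * e + e * \<alpha> + e * e"
    unfolding abs_mult using assms by (intro add_mono mult_mono) auto
  finally show ?thesis by (simp add: power2_eq_square algebra_simps)
qed

lemma integral_signed_bump_model:
  assumes "0 < \<epsilon>" "0 \<le> L" "L \<le> a / \<epsilon>" "L \<le> (1 - a) / \<epsilon>" "L \<le> c / \<epsilon>" "L \<le> (1 - c) / \<epsilon>"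
  shows "\<bar>integral {0..1} (\<lambda>x. (if k = j then (bump \<epsilon> a x)\<^sup>2 else 0) + (-1) ^ (k + j) * (bump \<epsilon> c x)\<^sup>2)
      - Xconst / \<epsilon> * ((if k = j then 1 else 0) + (-1) ^ (k + j))\<bar> \<le> 16 / \<epsilon> * exp (- L)"
proof -
  define I where "I a = integral {0..1} (\<lambda>x. (bump \<epsilon> a x)\<^sup>2)" for a
  have int: "(\<lambda>x. (bump \<epsilon> a x)\<^sup>2) integrable_on {0..1}" for a
    using bump_sq_has_integral[OF assms(1)] by blast
  have Ia: "\<bar>I a - Xconst / \<epsilon>\<bar> \<le> 8 / \<epsilon> * exp (- L)" and Ic: "\<bar>I c - Xconst / \<epsilon>\<bar> \<le> 8 / \<epsilon> * exp (- L)"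
    unfolding I_def using assms by (intro bump_sq_integral_approx; simp)+
  show ?thesis
  proof (cases "k = j")
    case True
    then have "(-1::real) ^ (k + j) = 1" by (simp flip: mult_2)
    with True have "integral {0..1} (\<lambda>x. (if k = j then (bump \<epsilon> a x)\<^sup>2 else 0) + (-1) ^ (k + j) * (bump \<epsilon> c x)\<^sup>2)
        - Xconst / \<epsilon> * ((if k = j then 1 else 0) + (-1) ^ (k + j))
        = (I a - Xconst / \<epsilon>) + (I c - Xconst / \<epsilon>)"
      unfolding I_def by (simp add: integral_add int algebra_simps)
    then show ?thesis using Ia Ic by simp
  next
    case False
    then have "integral {0..1} (\<lambda>x. (if k = j then (bump \<epsilon> a x)\<^sup>2 else 0) + (-1) ^ (k + j) * (bump \<epsilon> c x)\<^sup>2)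
        - Xconst / \<epsilon> * ((if k = j then 1 else 0) + (-1) ^ (k + j))
        = (-1) ^ (k + j) * (I c - Xconst / \<epsilon>)"
      unfolding I_def by (simp add: algebra_simps)
    then show ?thesis using Ic assms(1) by (simp add: abs_mult)
  qed
qed

lemma integrable_on_mult_bounded_measurable:
  fixes f g :: "real \<Rightarrow> real"
  assumes "f \<in> borel_measurable (lebesgue_on {a..b})" "g \<in> borel_measurable (lebesgue_on {a..b})"
    and f: "\<And>x. x \<in> {a..b} \<Longrightarrow> \<bar>f x\<bar> \<le> M" and g: "\<And>x. x \<in> {a..b} \<Longrightarrow> \<bar>g x\<bar> \<le> M"
  shows "(\<lambda>x. f x * g x) integrable_on {a..b}"
proof (rule measurable_bounded_by_integrable_imp_integrable_real)
  show "(\<lambda>x. f x * g x) \<in> borel_measurable (lebesgue_on {a..b})"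
    using assms(1,2) by (rule borel_measurable_times)
  show "\<bar>f x * g x\<bar> \<le> M * M" if "x \<in> {a..b}" for x
    unfolding abs_mult using f[OF that] g[OF that] by (intro mult_mono) auto
qed auto

lemma product_signed_bumps_approx:
  assumes "0 < \<epsilon>"
    and u: "\<bar>u - (-1) ^ k * (bump \<epsilon> a x - bump \<epsilon> c x)\<bar> \<le> e"
    and v: "\<bar>v - (-1) ^ j * (bump \<epsilon> a' x - bump \<epsilon> c x)\<bar> \<le> e"
    and "2 * r \<le> \<bar>a - c\<bar>" "2 * r \<le> \<bar>a' - c\<bar>"
    and "k \<noteq> j \<Longrightarrow> 2 * r \<le> \<bar>a - a'\<bar>" "k = j \<Longrightarrow> a = a'"
  shows "\<bar>u * v - ((if k = j then (bump \<epsilon> a x)\<^sup>2 else 0) + (-1) ^ (k + j) * (bump \<epsilon> c x)\<^sup>2)\<bar>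
    \<le> 12 / \<epsilon>\<^sup>2 * exp (- r / \<epsilon>) + 2 * e / \<epsilon> + e\<^sup>2"
proof -
  have "\<bar>u * v - ((-1) ^ k * (bump \<epsilon> a x - bump \<epsilon> c x)) * ((-1) ^ j * (bump \<epsilon> a' x - bump \<epsilon> c x))\<bar>
      \<le> 2 * e / \<epsilon> + e\<^sup>2"
    using mult_approx_bound[OF signed_bump_diff_le[OF assms(1)] signed_bump_diff_le[OF assms(1)] u v]
    by simp
  moreover note signed_bump_product_approx[where k = k and j = j and x = x, OF assms(1,4-7)]
  ultimately show ?thesis unfolding abs_le_iff by linarith
qed

lemma integral_approx_bound:
  fixes f g :: "real \<Rightarrow> real"
  assumes "f integrable_on {a..b}" "g integrable_on {a..b}" "a \<le> b"
    and "\<And>x. x \<in> {a..b} \<Longrightarrow> \<bar>f x - g x\<bar> \<le> B"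
  shows "\<bar>integral {a..b} f - integral {a..b} g\<bar> \<le> B * (b - a)"
proof -
  have "norm (integral {a..b} (\<lambda>x. f x - g x)) \<le> integral {a..b} (\<lambda>_. B)"
    using assms by (intro integral_norm_bound_integral integrable_diff) auto
  then show ?thesis using assms(1-3) by (simp add: integral_diff mult.commute)
qed

(* A point u^xi of M_mu at scale eps, where Ec bounds the O(exp) errors in the derivatives
  of beta_N and of h_{N+1} along xi. *)
locale slow_manifold_point =
  fixes N :: nat and \<kappa> \<epsilon> Ec :: real
    and b :: "real \<Rightarrow> (nat \<Rightarrow> real) \<Rightarrow> real \<Rightarrow> real"
    and H :: "real \<Rightarrow> (nat \<Rightarrow> real) \<Rightarrow> real" and \<xi> :: "nat \<Rightarrow> real"
  assumes eps: "0 < \<epsilon>" "\<epsilon> \<le> 1"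
    and Omega: "Omega N \<kappa> \<epsilon> (hxi N H \<epsilon> \<xi>)"
    and b_differentiable: "\<And>h x. Omega N \<kappa> \<epsilon> h \<Longrightarrow> b \<epsilon> h differentiable (at x)"
    and b_param: "\<And>i x. i \<in> {1..N} \<Longrightarrow> x \<in> {0..1} \<Longrightarrow>
      (\<lambda>t. b \<epsilon> (hxi N H \<epsilon> (\<xi>(i := t))) x) differentiable (at (\<xi> i)) \<and>
      \<bar>deriv (\<lambda>t. b \<epsilon> (hxi N H \<epsilon> (\<xi>(i := t))) x) (\<xi> i)\<bar> \<le> Ec"
    and H_param: "\<And>i. i \<in> {1..N} \<Longrightarrow> \<exists>D. ((\<lambda>t. H \<epsilon> (\<xi>(i := t))) has_real_derivative D) (at (\<xi> i))
      \<and> \<bar>D - (-1) ^ (N - i)\<bar> \<le> Ec"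
begin

lemma uxik_approx_signed_bumps:
  assumes "i \<in> {1..N}" "x \<in> {0..1}"
  shows "\<bar>uxik N b H \<epsilon> \<xi> i x - (-1) ^ i * (bump \<epsilon> (\<xi> i) x - bump \<epsilon> (H \<epsilon> \<xi>) x)\<bar> \<le> 2 * Ec / \<epsilon>"
proof -
  obtain D where D: "((\<lambda>t. H \<epsilon> (\<xi>(i := t))) has_real_derivative D) (at (\<xi> i))"
    "\<bar>D - (-1) ^ (N - i)\<bar> \<le> Ec"
    using H_param[OF assms(1)] by blast
  have "((\<lambda>t. b \<epsilon> (hxi N H \<epsilon> (\<xi>(i := t))) x) has_real_derivative
      deriv (\<lambda>t. b \<epsilon> (hxi N H \<epsilon> (\<xi>(i := t))) x) (\<xi> i)) (at (\<xi> i))"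
    using b_param[OF assms] by (simp add: DERIV_deriv_iff_real_differentiable)
  with b_param[OF assms] show ?thesis
    using uxik_approx[where b = b and x = x and H = H and \<xi> = \<xi>, OF eps assms(1) D] by blast
qed

lemma uxik_measurable:
  assumes "i \<in> {1..N}"
  shows "uxik N b H \<epsilon> \<xi> i \<in> borel_measurable (lebesgue_on {0..1})"
proof (rule uxik_borel_measurable[where H = H and b = b and \<xi> = \<xi>, OF eps(1) assms Omega b_differentiable])
  show "(\<lambda>t. H \<epsilon> (\<xi>(i := t))) differentiable (at (\<xi> i))"
    using H_param[OF assms] real_differentiable_def by blast
  show "(\<lambda>t. b \<epsilon> (hxi N H \<epsilon> (\<xi>(i := t))) x) differentiable (at (\<xi> i))" if "x \<in> {0..1}" for x
    using b_param[OF assms that] by blast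
qed

lemma uxik_bounded:
  assumes "i \<in> {1..N}" "x \<in> {0..1}"
  shows "\<bar>uxik N b H \<epsilon> \<xi> i x\<bar> \<le> 1 / \<epsilon> + 2 * Ec / \<epsilon>"
  using uxik_approx_signed_bumps[OF assms] signed_bump_diff_le[OF eps(1), of i "\<xi> i" x "H \<epsilon> \<xi>"]
  by linarith

lemma fronts_separated:
  assumes "i \<in> {1..N}"
  shows "\<epsilon> / \<epsilon> powr \<kappa> < \<bar>\<xi> i - H \<epsilon> \<xi>\<bar>"
    and "i' \<in> {1..N} \<Longrightarrow> i \<noteq> i' \<Longrightarrow> \<epsilon> / \<epsilon> powr \<kappa> < \<bar>\<xi> i - \<xi> i'\<bar>"
    and "\<epsilon> / \<epsilon> powr \<kappa> / 2 < \<xi> i" "\<epsilon> / \<epsilon> powr \<kappa> / 2 < 1 - \<xi> i"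
    and "\<epsilon> / \<epsilon> powr \<kappa> / 2 < H \<epsilon> \<xi>" "\<epsilon> / \<epsilon> powr \<kappa> / 2 < 1 - H \<epsilon> \<xi>"
  using Omega_separated[OF Omega, of i "N + 1"] Omega_separated[OF Omega, of i i']
    Omega_boundary_gap[OF Omega, of i] Omega_boundary_gap[OF Omega, of "N + 1"] assms
  by (auto simp: hxi_def)

lemma gram_matrix_estimate:
  assumes k: "k \<in> {1..N}" and j: "j \<in> {1..N}"
  shows "\<bar>L2ip (uxik N b H \<epsilon> \<xi> k) (uxik N b H \<epsilon> \<xi> j)
      - Xconst / \<epsilon> * ((if k = j then 1 else 0) + (-1) ^ (k + j))\<bar>
    \<le> (28 * exp (- 1 / (2 * \<epsilon> powr \<kappa>)) + 4 * Ec + 4 * Ec\<^sup>2) / \<epsilon>\<^sup>2"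
proof -
  define r where "r = \<epsilon> / \<epsilon> powr \<kappa> / 2"
  define \<eta> where "\<eta> = exp (- 1 / (2 * \<epsilon> powr \<kappa>))"
  have \<eta>: "exp (- r / \<epsilon>) = \<eta>" unfolding r_def \<eta>_def using eps by simp
  define P where "P x = (if k = j then (bump \<epsilon> (\<xi> k) x)\<^sup>2 else 0) + (-1) ^ (k + j) * (bump \<epsilon> (H \<epsilon> \<xi>) x)\<^sup>2"
    for x
  have gaps: "2 * r \<le> \<bar>\<xi> k - H \<epsilon> \<xi>\<bar>" "2 * r \<le> \<bar>\<xi> j - H \<epsilon> \<xi>\<bar>"
    "k \<noteq> j \<Longrightarrow> 2 * r \<le> \<bar>\<xi> k - \<xi> j\<bar>"
    using fronts_separated(1)[OF k] fronts_separated(1)[OF j] fronts_separated(2)[OF k j]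
    unfolding r_def by auto
  have integrand: "\<bar>uxik N b H \<epsilon> \<xi> k x * uxik N b H \<epsilon> \<xi> j x - P x\<bar>
      \<le> 12 / \<epsilon>\<^sup>2 * \<eta> + 2 * (2 * Ec / \<epsilon>) / \<epsilon> + (2 * Ec / \<epsilon>)\<^sup>2" if "x \<in> {0..1}" for x
    unfolding P_def \<eta>[symmetric]
    by (rule product_signed_bumps_approx[OF eps(1) uxik_approx_signed_bumps[OF k that]
          uxik_approx_signed_bumps[OF j that] gaps]) simp_all
  have int_uu: "(\<lambda>x. uxik N b H \<epsilon> \<xi> k x * uxik N b H \<epsilon> \<xi> j x) integrable_on {0..1}"
    by (rule integrable_on_mult_bounded_measurable[OF uxik_measurable[OF k] uxik_measurable[OF j]
          uxik_bounded[OF k] uxik_bounded[OF j]])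
  have int_P: "P integrable_on {0..1}"
    unfolding P_def[abs_def] using continuous_on_bump[OF eps(1)]
    by (cases "k = j") (auto intro!: integrable_continuous_interval continuous_intros)
  have "\<bar>L2ip (uxik N b H \<epsilon> \<xi> k) (uxik N b H \<epsilon> \<xi> j) - integral {0..1} P\<bar>
      \<le> 12 / \<epsilon>\<^sup>2 * \<eta> + 2 * (2 * Ec / \<epsilon>) / \<epsilon> + (2 * Ec / \<epsilon>)\<^sup>2"
    using integral_approx_bound[OF int_uu int_P _ integrand] unfolding L2ip_def by simp
  moreover have "\<bar>integral {0..1} P - Xconst / \<epsilon> * ((if k = j then 1 else 0) + (-1) ^ (k + j))\<bar>
      \<le> 16 / \<epsilon> * \<eta>"
  proof -
    have "0 \<le> r" "r \<le> \<xi> k" "r \<le> 1 - \<xi> k" "r \<le> H \<epsilon> \<xi>" "r \<le> 1 - H \<epsilon> \<xi>"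
      using fronts_separated[OF k] eps unfolding r_def by auto
    then show ?thesis
      unfolding P_def \<eta>[symmetric] minus_divide_left[symmetric] using eps
      by (intro integral_signed_bump_model) (auto intro: divide_right_mono)
  qed
  moreover have "16 / \<epsilon> * \<eta> \<le> 16 / \<epsilon>\<^sup>2 * \<eta>"
  proof -
    have "1 / \<epsilon> \<le> 1 / \<epsilon>\<^sup>2" using eps by (intro frac_le) (auto simp: power2_eq_square mult_left_le)
    then show ?thesis unfolding \<eta>_def by (intro mult_right_mono) auto
  qed
  ultimately have "\<bar>L2ip (uxik N b H \<epsilon> \<xi> k) (uxik N b H \<epsilon> \<xi> j)
      - Xconst / \<epsilon> * ((if k = j then 1 else 0) + (-1) ^ (k + j))\<bar>
    \<le> 12 / \<epsilon>\<^sup>2 * \<eta> + 2 * (2 * Ec / \<epsilon>) / \<epsilon> + (2 * Ec / \<epsilon>)\<^sup>2 + 16 / \<epsilon>\<^sup>2 * \<eta>"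
    unfolding abs_le_iff by linarith
  also have "\<dots> = (28 * \<eta> + 4 * Ec + 4 * Ec\<^sup>2) / \<epsilon>\<^sup>2"
    using eps by (simp add: field_simps power2_eq_square)
  finally show ?thesis unfolding \<eta>_def .
qed

end

lemma exp_small_absorbs_square:
  fixes a \<kappa> :: real
  assumes "0 < a" "0 < \<kappa>"
  shows "eventually (\<lambda>\<epsilon>. exp (- a / \<epsilon> powr \<kappa>) / \<epsilon>\<^sup>2 \<le> exp (- (a / 2) / \<epsilon> powr \<kappa>)) (at_right 0)"
  using assms by real_asymp

lemma gram_error_exp_small:
  fixes \<kappa> c C :: real
  assumes "0 < \<kappa>" "0 < c" "0 \<le> C"
  shows "\<exists>e0>0. \<forall>\<epsilon>. 0 < \<epsilon> \<longrightarrow> \<epsilon> < e0 \<longrightarrow>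
    (28 * exp (- 1 / (2 * \<epsilon> powr \<kappa>)) + 4 * (C * exp (- c / \<epsilon> powr \<kappa>))
      + 4 * (C * exp (- c / \<epsilon> powr \<kappa>))\<^sup>2) / \<epsilon>\<^sup>2
    \<le> (28 + 4 * C + 4 * C\<^sup>2) * exp (- (min c (1/2) / 2) / \<epsilon> powr \<kappa>)"
proof -
  define c1 where "c1 = min c (1/2)"
  have c1: "0 < c1" "c1 \<le> c" "c1 \<le> 1/2" unfolding c1_def using assms(2) by auto
  obtain e0 where "e0 > 0" and absorb: "\<And>\<epsilon>. 0 < \<epsilon> \<Longrightarrow> \<epsilon> < e0 \<Longrightarrow>
      exp (- c1 / \<epsilon> powr \<kappa>) / \<epsilon>\<^sup>2 \<le> exp (- (c1 / 2) / \<epsilon> powr \<kappa>)"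
    using exp_small_absorbs_square[OF c1(1) assms(1)] by (auto simp: eventually_at_right_field)
  have "(28 * exp (- 1 / (2 * \<epsilon> powr \<kappa>)) + 4 * (C * exp (- c / \<epsilon> powr \<kappa>))
      + 4 * (C * exp (- c / \<epsilon> powr \<kappa>))\<^sup>2) / \<epsilon>\<^sup>2
    \<le> (28 + 4 * C + 4 * C\<^sup>2) * exp (- (c1 / 2) / \<epsilon> powr \<kappa>)" if "0 < \<epsilon>" "\<epsilon> < e0" for \<epsilon>
  proof -
    define E x where "E = exp (- c1 / \<epsilon> powr \<kappa>)" and "x = exp (- c / \<epsilon> powr \<kappa>)"
    have "c1 / \<epsilon> powr \<kappa> \<le> (1 / 2) / \<epsilon> powr \<kappa>" "c1 / \<epsilon> powr \<kappa> \<le> c / \<epsilon> powr \<kappa>"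
      using c1 that by (intro divide_right_mono; simp)+
    then have a: "exp (- 1 / (2 * \<epsilon> powr \<kappa>)) \<le> E" and x: "x \<le> E"
      unfolding E_def x_def by auto
    have "0 < x" "x \<le> 1" unfolding x_def using assms(2) that by auto
    then have "x\<^sup>2 \<le> E" using x unfolding power2_eq_square by (meson mult_left_le_one_le less_imp_le order_trans)
    then have "4 * (C * x)\<^sup>2 \<le> 4 * C\<^sup>2 * E"
      by (simp add: power_mult_distrib mult_left_mono)
    moreover have "4 * (C * x) \<le> 4 * C * E" using x assms(3) by (simp add: mult_left_mono)
    ultimately have "28 * exp (- 1 / (2 * \<epsilon> powr \<kappa>)) + 4 * (C * x) + 4 * (C * x)\<^sup>2
        \<le> 28 * E + 4 * C * E + 4 * C\<^sup>2 * E"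
      using a by linarith
    also have "\<dots> = (28 + 4 * C + 4 * C\<^sup>2) * E" by (simp add: algebra_simps)
    finally have "(28 * exp (- 1 / (2 * \<epsilon> powr \<kappa>)) + 4 * (C * x) + 4 * (C * x)\<^sup>2) / \<epsilon>\<^sup>2
        \<le> (28 + 4 * C + 4 * C\<^sup>2) * (E / \<epsilon>\<^sup>2)"
      using that by (simp add: divide_right_mono)
    also have "\<dots> \<le> (28 + 4 * C + 4 * C\<^sup>2) * exp (- (c1 / 2) / \<epsilon> powr \<kappa>)"
      using absorb[OF that] assms(3) unfolding E_def by (intro mult_left_mono) auto
    finally show ?thesis unfolding x_def .
  qed
  with \<open>e0 > 0\<close> show ?thesis unfolding c1_def by blast
qed

lemma gram_matrix_exp_estimate:
  fixes b :: "real \<Rightarrow> (nat \<Rightarrow> real) \<Rightarrow> real \<Rightarrow> real" and H :: "real \<Rightarrow> (nat \<Rightarrow> real) \<Rightarrow> real"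
  assumes "0 < \<kappa>" "0 < C" "0 < c" "0 < e0"
    and bx: "\<And>\<epsilon> h x. 0 < \<epsilon> \<Longrightarrow> \<epsilon> < e0 \<Longrightarrow> Omega N \<kappa> \<epsilon> h \<Longrightarrow> b \<epsilon> h differentiable (at x)"
    and bt: "\<And>\<epsilon> \<xi> i x. 0 < \<epsilon> \<Longrightarrow> \<epsilon> < e0 \<Longrightarrow> Omega N \<kappa> \<epsilon> (hxi N H \<epsilon> \<xi>) \<Longrightarrow> i \<in> {1..N} \<Longrightarrow>
      x \<in> {0..1} \<Longrightarrow> (\<lambda>t. b \<epsilon> (hxi N H \<epsilon> (\<xi>(i := t))) x) differentiable (at (\<xi> i)) \<and>
      \<bar>deriv (\<lambda>t. b \<epsilon> (hxi N H \<epsilon> (\<xi>(i := t))) x) (\<xi> i)\<bar> \<le> C * exp (- c / \<epsilon> powr \<kappa>)"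
    and Ht: "\<And>\<epsilon> \<xi> i. 0 < \<epsilon> \<Longrightarrow> \<epsilon> < e0 \<Longrightarrow> (\<forall>l\<in>{1..N}. 0 < \<xi> l \<and> \<xi> l < 1) \<Longrightarrow> i \<in> {1..N} \<Longrightarrow>
      \<exists>D. ((\<lambda>t. H \<epsilon> (\<xi>(i := t))) has_real_derivative D) (at (\<xi> i)) \<and>
        \<bar>D - (-1) ^ (N - i)\<bar> \<le> C * exp (- c / \<epsilon> powr \<kappa>)"
  shows "\<exists>C>0. \<exists>c>0. \<exists>e0>0. \<forall>\<epsilon> \<xi> k j. 0 < \<epsilon> \<longrightarrow> \<epsilon> < e0 \<longrightarrow>
           Omega N \<kappa> \<epsilon> (hxi N H \<epsilon> \<xi>) \<longrightarrow> k \<in> {1..N} \<longrightarrow> j \<in> {1..N} \<longrightarrow>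
           \<bar>L2ip (uxik N b H \<epsilon> \<xi> k) (uxik N b H \<epsilon> \<xi> j)
              - Xconst / \<epsilon> * ((if k = j then 1 else 0) + (-1) ^ (k + j))\<bar>
             \<le> C * exp (- c / \<epsilon> powr \<kappa>)"
proof -
  obtain e1 where "e1 > 0" and small: "\<And>\<epsilon>. 0 < \<epsilon> \<Longrightarrow> \<epsilon> < e1 \<Longrightarrow>
      (28 * exp (- 1 / (2 * \<epsilon> powr \<kappa>)) + 4 * (C * exp (- c / \<epsilon> powr \<kappa>))
        + 4 * (C * exp (- c / \<epsilon> powr \<kappa>))\<^sup>2) / \<epsilon>\<^sup>2
      \<le> (28 + 4 * C + 4 * C\<^sup>2) * exp (- (min c (1/2) / 2) / \<epsilon> powr \<kappa>)"
    using gram_error_exp_small[OF assms(1,3) less_imp_le[OF assms(2)]] by blast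
  have bound: "\<bar>L2ip (uxik N b H \<epsilon> \<xi> k) (uxik N b H \<epsilon> \<xi> j)
      - Xconst / \<epsilon> * ((if k = j then 1 else 0) + (-1) ^ (k + j))\<bar>
    \<le> (28 + 4 * C + 4 * C\<^sup>2) * exp (- (min c (1/2) / 2) / \<epsilon> powr \<kappa>)"
    if \<epsilon>: "0 < \<epsilon>" "\<epsilon> < min e0 (min 1 e1)" and Om: "Omega N \<kappa> \<epsilon> (hxi N H \<epsilon> \<xi>)"
      and kj: "k \<in> {1..N}" "j \<in> {1..N}" for \<epsilon> \<xi> k j
  proof -
    have "\<forall>l\<in>{1..N}. 0 < \<xi> l \<and> \<xi> l < 1"
      using Omega_hxi_interior[OF \<epsilon>(1) Om] by blast
    then interpret slow_manifold_point N \<kappa> \<epsilon> "C * exp (- c / \<epsilon> powr \<kappa>)" b H \<xi>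
      using \<epsilon> Om bx bt Ht by unfold_locales auto
    show ?thesis
      using \<epsilon> by (intro order_trans[OF gram_matrix_estimate[OF kj] small]) auto
  qed
  show ?thesis
  proof (intro exI conjI allI impI)
    show "0 < 28 + 4 * C + 4 * C\<^sup>2" using assms(2) by (simp add: add_pos_nonneg)
    show "0 < min c (1/2) / 2" using assms(3) by simp
    show "0 < min e0 (min 1 e1)" using assms(4) \<open>e1 > 0\<close> by simp
  qed (rule bound)
qed

theorem lemma5p9:
  fixes N :: nat and \<kappa>0 \<mu> :: real
    and b :: "real \<Rightarrow> (nat \<Rightarrow> real) \<Rightarrow> real \<Rightarrow> real"
    and H :: "real \<Rightarrow> (nat \<Rightarrow> real) \<Rightarrow> real"
  assumes N: "N \<ge> 1"
    and kappa: "0 < \<kappa>0"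
    and mu: "-1 < \<mu>" "\<mu> < 1"
    and standing: "\<exists>C>0. \<exists>c>0. \<exists>e0>0. \<forall>\<epsilon>. 0 < \<epsilon> \<and> \<epsilon> < e0 \<longrightarrow>
      \<comment> \<open>beta_N = ((-1)^N - 1)/2 + O(exp), also for x-derivatives; u^h(0) = -1; Neumann BCs\<close>
      (\<forall>h. Omega N \<kappa>0 \<epsilon> h \<longrightarrow>
         (\<forall>x. b \<epsilon> h differentiable (at x) \<and>
              \<bar>b \<epsilon> h x - ((-1) ^ N - 1) / 2\<bar> \<le> C * exp (- c / \<epsilon> powr \<kappa>0) \<and>
              \<bar>deriv (b \<epsilon> h) x\<bar> \<le> C * exp (- c / \<epsilon> powr \<kappa>0)) \<and>
         uh N b \<epsilon> h 0 = -1 \<and>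
         deriv (uh N b \<epsilon> h) 0 = 0 \<and> deriv (uh N b \<epsilon> h) 1 = 0) \<and>
      \<comment> \<open>h-derivatives of beta_N are O(exp) (stated along the constraint manifold)\<close>
      (\<forall>\<xi> k. Omega N \<kappa>0 \<epsilon> (hxi N H \<epsilon> \<xi>) \<longrightarrow> k \<in> {1..N} \<longrightarrow> (\<forall>x\<in>{0..1}.
         (\<lambda>t. b \<epsilon> (hxi N H \<epsilon> (\<xi>(k := t))) x) differentiable (at (\<xi> k)) \<and>
         \<bar>deriv (\<lambda>t. b \<epsilon> (hxi N H \<epsilon> (\<xi>(k := t))) x) (\<xi> k)\<bar> \<le> C * exp (- c / \<epsilon> powr \<kappa>0))) \<and>
      \<comment> \<open>h_{N+1}(xi) depends only on xi = (xi_1,...,xi_N)\<close>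
      (\<forall>\<xi> \<xi>'. (\<forall>l\<in>{1..N}. \<xi> l = \<xi>' l) \<longrightarrow> H \<epsilon> \<xi> = H \<epsilon> \<xi>') \<and>
      \<comment> \<open>u^h in M_mu iff h = (xi, h_{N+1}(xi))\<close>
      (\<forall>h. Omega N \<kappa>0 \<epsilon> h \<longrightarrow>
         (integral {0..1} (uh N b \<epsilon> h) = \<mu> \<longleftrightarrow> h (N + 1) = H \<epsilon> h)) \<and>
      \<comment> \<open>h_{N+1} is differentiable on (0,1)^N with d h_{N+1}/d h_i = (-1)^(N-i) + O(exp)\<close>
      (\<forall>\<xi> i. (\<forall>l\<in>{1..N}. 0 < \<xi> l \<and> \<xi> l < 1) \<longrightarrow> i \<in> {1..N} \<longrightarrow>
         (\<exists>D. ((\<lambda>t. H \<epsilon> (\<xi>(i := t))) has_real_derivative D) (at (\<xi> i)) \<and>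
              \<bar>D - (-1) ^ (N - i)\<bar> \<le> C * exp (- c / \<epsilon> powr \<kappa>0)))"
  shows "\<exists>C>0. \<exists>c>0. \<exists>e0>0. \<forall>\<epsilon> \<xi> k j. 0 < \<epsilon> \<longrightarrow> \<epsilon> < e0 \<longrightarrow>
           Omega N \<kappa>0 \<epsilon> (hxi N H \<epsilon> \<xi>) \<longrightarrow> k \<in> {1..N} \<longrightarrow> j \<in> {1..N} \<longrightarrow>
           \<bar>L2ip (uxik N b H \<epsilon> \<xi> k) (uxik N b H \<epsilon> \<xi> j)
              - Xconst / \<epsilon> * ((if k = j then 1 else 0) + (-1) ^ (k + j))\<bar>
             \<le> C * exp (- c / \<epsilon> powr \<kappa>0)"
  using standing
  apply (elim exE conjE)
  subgoal premises prems for C c e0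
  proof (rule gram_matrix_exp_estimate[OF kappa prems(1-3)])
    note standing_at = prems(4)[rule_format, OF conjI]
    show "b \<epsilon> h differentiable (at x)"
      if "0 < \<epsilon>" "\<epsilon> < e0" "Omega N \<kappa>0 \<epsilon> h" for \<epsilon> h x
      using standing_at[OF that(1,2)] that(3) by blast
    show "(\<lambda>t. b \<epsilon> (hxi N H \<epsilon> (\<xi>(i := t))) x) differentiable (at (\<xi> i)) \<and>
        \<bar>deriv (\<lambda>t. b \<epsilon> (hxi N H \<epsilon> (\<xi>(i := t))) x) (\<xi> i)\<bar> \<le> C * exp (- c / \<epsilon> powr \<kappa>0)"
      if "0 < \<epsilon>" "\<epsilon> < e0" "Omega N \<kappa>0 \<epsilon> (hxi N H \<epsilon> \<xi>)" "i \<in> {1..N}" "x \<in> {0..1}"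
      for \<epsilon> \<xi> i x
      using standing_at[OF that(1,2)] that(3-5) by blast
    show "\<exists>D. ((\<lambda>t. H \<epsilon> (\<xi>(i := t))) has_real_derivative D) (at (\<xi> i)) \<and>
        \<bar>D - (-1) ^ (N - i)\<bar> \<le> C * exp (- c / \<epsilon> powr \<kappa>0)"
      if "0 < \<epsilon>" "\<epsilon> < e0" "\<forall>l\<in>{1..N}. 0 < \<xi> l \<and> \<xi> l < 1" "i \<in> {1..N}" for \<epsilon> \<xi> i
      using standing_at[OF that(1,2)] that(3,4) by blast
  qed
  done

end
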